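(* In the construction described in the context, $H_i\subseteq H_{i+1}$ for every $i=0,\dots,\ell-1$.
   Context: **Setting.** Let $G=(V,E)$ be an undirected graph (parallel edges allowed, no self-loops) with $n$ vertices and $m$ edges $E=\{e_1,\dots,e_m\}$. Fix integers $c\ge1$, $\delta>c$, $\ell\ge1$ and a real $p\in(0,1)$, and let $s=\lceil pm\rceil$. For graphs on the same vertex set, $\cup$ and $\cap$ act on edge sets, and $\subseteq$ means subgraph. For $C\subseteq V$ and a graph $F$ on $V$, $\partial_F(C)$ is the set of edges of $F$ with exactly one endpoint in $C$. A graph is $c$-edge-connected if it has no cut of size $<c$, and $c$-edge-connected components are maximal induced $c$-edge-connected subgraphs. **Sampling.** For $i=1,\dots,\ell$, let $r_i:\{1,\dots,s\}\to\{1,\dots,m\}$ be a pairwise independent random function: each value is uniform and any two values are independent. The functions $r_1,\dots,r_\ell$ are mutually independent. Set $H_0^0=(V,\emptyset)$ and $H_i^0=H_{i-1}^0\cup(V,\{e_{r_i(1)},\dots,e_{r_i(s)}\})$. **Levels.** Set $G_{-1}=G$. For $i=0,\dots,\ell$, define $H_i$ and $G_i$ as follows. - $H_i$ is the subgraph of $H_i^0\cap G_{i-1}$ consisting of the edges lying inside its $c$-edge-connected components. Equivalently, it is obtained by repeatedly removing all edges lying in cuts of size $<c$. - Start with $G_i:=G_{i-1}$. While some connected component $C$ of $H_i$ satisfies $0<|\partial_{G_i}(C)|<\delta$, delete the edges of $\partial_{G_i}(C)$ from $G_i$ and from $H_i$. *)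

theory Defs
  imports Complex_Main
begin

text \<open>A multigraph on vertex set V with edges indexed 1..m; ends e gives the two
endpoints of edge e. A graph on V is represented by a set of edge indices.\<close>

definition crosses :: "(nat \<Rightarrow> 'v \<times> 'v) \<Rightarrow> 'v set \<Rightarrow> nat \<Rightarrow> bool" where
  "crosses ends C e \<longleftrightarrow> ((fst (ends e) \<in> C) \<noteq> (snd (ends e) \<in> C))"

definition boundary :: "(nat \<Rightarrow> 'v \<times> 'v) \<Rightarrow> nat set \<Rightarrow> 'v set \<Rightarrow> nat set" where
  "boundary ends F C = {e \<in> F. crosses ends C e}"

definition induced :: "(nat \<Rightarrow> 'v \<times> 'v) \<Rightarrow> nat set \<Rightarrow> 'v set \<Rightarrow> nat set" where
  "induced ends F X = {e \<in> F. fst (ends e) \<in> X \<and> snd (ends e) \<in> X}"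

definition edge_connected :: "(nat \<Rightarrow> 'v \<times> 'v) \<Rightarrow> nat \<Rightarrow> nat set \<Rightarrow> 'v set \<Rightarrow> bool" where
  "edge_connected ends k F X \<longleftrightarrow>
     (\<forall>S. S \<subseteq> X \<and> S \<noteq> {} \<and> S \<noteq> X \<longrightarrow> card (boundary ends (induced ends F X) S) \<ge> k)"

definition kecc_component :: "'v set \<Rightarrow> (nat \<Rightarrow> 'v \<times> 'v) \<Rightarrow> nat \<Rightarrow> nat set \<Rightarrow> 'v set \<Rightarrow> bool" where
  "kecc_component V ends k F X \<longleftrightarrow>
     X \<subseteq> V \<and> X \<noteq> {} \<and> edge_connected ends k F X \<and>
     (\<forall>Y. X \<subset> Y \<and> Y \<subseteq> V \<longrightarrow> \<not> edge_connected ends k F Y)"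

definition kecc_edges :: "'v set \<Rightarrow> (nat \<Rightarrow> 'v \<times> 'v) \<Rightarrow> nat \<Rightarrow> nat set \<Rightarrow> nat set" where
  "kecc_edges V ends k F =
     {e \<in> F. \<exists>X. kecc_component V ends k F X \<and> fst (ends e) \<in> X \<and> snd (ends e) \<in> X}"

definition conn_rel :: "'v set \<Rightarrow> (nat \<Rightarrow> 'v \<times> 'v) \<Rightarrow> nat set \<Rightarrow> ('v \<times> 'v) set" where
  "conn_rel V ends F =
     ({(u, v). \<exists>e\<in>F. ends e = (u, v) \<or> ends e = (v, u)})\<^sup>* \<inter> (V \<times> V)"

definition components :: "'v set \<Rightarrow> (nat \<Rightarrow> 'v \<times> 'v) \<Rightarrow> nat set \<Rightarrow> 'v set set" where
  "components V ends F = V // conn_rel V ends F"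

text \<open>One step of the deletion loop on the state (G_i, H_i)\<close>
definition del_step :: "'v set \<Rightarrow> (nat \<Rightarrow> 'v \<times> 'v) \<Rightarrow> nat \<Rightarrow>
    nat set \<times> nat set \<Rightarrow> nat set \<times> nat set \<Rightarrow> bool" where
  "del_step V ends \<delta> st st' \<longleftrightarrow>
     (\<exists>C \<in> components V ends (snd st).
        0 < card (boundary ends (fst st) C) \<and> card (boundary ends (fst st) C) < \<delta> \<and>
        st' = (fst st - boundary ends (fst st) C, snd st - boundary ends (fst st) C))"

definition del_final :: "'v set \<Rightarrow> (nat \<Rightarrow> 'v \<times> 'v) \<Rightarrow> nat \<Rightarrow> nat set \<times> nat set \<Rightarrow> bool" where
  "del_final V ends \<delta> st \<longleftrightarrow> (\<nexists>st'. del_step V ends \<delta> st st')"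

text \<open>H_i^0 = union of the first i samples (edge indices r j k)\<close>
definition sampled :: "(nat \<Rightarrow> nat \<Rightarrow> nat) \<Rightarrow> nat \<Rightarrow> nat \<Rightarrow> nat set" where
  "sampled r s i = (\<Union>j\<in>{1..i}. r j ` {1..s})"

text \<open>Gs i, Hs i (i = 0..l) form a valid execution of the level construction
  (any choice of components in the while loop), with G_{-1} = all edges.\<close>
definition valid_levels :: "'v set \<Rightarrow> (nat \<Rightarrow> 'v \<times> 'v) \<Rightarrow> nat \<Rightarrow> nat \<Rightarrow> nat \<Rightarrow> nat \<Rightarrow> nat \<Rightarrow>
    (nat \<Rightarrow> nat \<Rightarrow> nat) \<Rightarrow> (nat \<Rightarrow> nat set) \<Rightarrow> (nat \<Rightarrow> nat set) \<Rightarrow> bool" where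
  "valid_levels V ends m c \<delta> l s r Gs Hs \<longleftrightarrow>
     (\<forall>i \<le> l.
        (let Gprev = (if i = 0 then {1..m} else Gs (i - 1));
             Hstart = kecc_edges V ends c (sampled r s i \<inter> Gprev)
         in (del_step V ends \<delta>)\<^sup>*\<^sup>* (Gprev, Hstart) (Gs i, Hs i)
            \<and> del_final V ends \<delta> (Gs i, Hs i)))"

end

theory Submission
  imports Defs
begin

text \<open>The deletion loop only removes boundary edges of connected components of H, and no edge
  of H crosses such a component, so it never touches H: hence H_i is exactly the subgraph of
  c-edge-connected components of H_i^0 \<inter> G_(i-1), and H_i \<subseteq> G_i. Since H_i^0 \<subseteq> H_(i+1)^0,
  the graph H_(i+1)^0 \<inter> G_i contains all of H_i. Every c-edge-connected component of
  H_i^0 \<inter> G_(i-1) therefore stays c-edge-connected in H_(i+1)^0 \<inter> G_i (its induced edges all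
  survive) and lies inside a maximal one there, so each edge of H_i is an edge of H_(i+1).\<close>

lemma component_not_crosses:
  assumes "C \<in> components V ends H" "e \<in> H" "fst (ends e) \<in> V" "snd (ends e) \<in> V"
  shows "\<not> crosses ends C e"
proof -
  obtain x where x: "x \<in> V" "C = conn_rel V ends H `` {x}"
    using assms(1) unfolding components_def quotient_def by blast
  obtain u v where uv: "ends e = (u, v)" by (cases "ends e")
  let ?R = "{(u, v). \<exists>e\<in>H. ends e = (u, v) \<or> ends e = (v, u)}"
  have "(u, v) \<in> ?R" "(v, u) \<in> ?R" using assms(2) uv by blast+
  then have "(x, u) \<in> ?R\<^sup>* \<longleftrightarrow> (x, v) \<in> ?R\<^sup>*" by (meson rtrancl_into_rtrancl)
  then have "u \<in> C \<longleftrightarrow> v \<in> C"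
    using x assms(3,4) uv unfolding conn_rel_def by auto
  then show ?thesis unfolding crosses_def uv by simp
qed

lemma del_step_keeps_snd:
  assumes "del_step V ends \<delta> (G, H) (G', H')" "\<forall>e\<in>H. fst (ends e) \<in> V \<and> snd (ends e) \<in> V"
  shows "H' = H" and "H \<inter> G \<subseteq> G'"
proof -
  obtain C where C: "C \<in> components V ends H"
    and G': "G' = G - boundary ends G C" and H': "H' = H - boundary ends G C"
    using assms(1) unfolding del_step_def by auto
  have "boundary ends G C \<inter> H = {}"
    using component_not_crosses[OF C] assms(2) unfolding boundary_def by auto
  then show "H' = H" and "H \<inter> G \<subseteq> G'" using G' H' by auto
qed

lemma del_steps_keep_snd:
  assumes "(del_step V ends \<delta>)\<^sup>*\<^sup>* (G, H) (G', H')"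
    and "\<forall>e\<in>H. fst (ends e) \<in> V \<and> snd (ends e) \<in> V" and "H \<subseteq> G"
  shows "H' = H \<and> H \<subseteq> G'"
  using assms(1)
proof (induction rule: rtranclp_induct2)
  case refl
  then show ?case using assms(3) by simp
next
  case (step G1 H1 G2 H2)
  then show ?case using del_step_keeps_snd[of V ends \<delta> G1 H1 G2 H2] assms(2) by blast
qed

lemma edge_connected_mono:
  assumes "edge_connected ends k F X" "induced ends F X \<subseteq> F'" "finite F'"
  shows "edge_connected ends k F' X"
  unfolding edge_connected_def
proof (intro allI impI)
  fix S assume S: "S \<subseteq> X \<and> S \<noteq> {} \<and> S \<noteq> X"
  have "k \<le> card (boundary ends (induced ends F X) S)"
    using assms(1) S unfolding edge_connected_def by blast
  also have "\<dots> \<le> card (boundary ends (induced ends F' X) S)"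
    using assms(2,3) by (intro card_mono) (auto simp: boundary_def induced_def)
  finally show "k \<le> card (boundary ends (induced ends F' X) S)" .
qed

lemma edge_connected_in_kecc_component:
  assumes "finite V" "X \<subseteq> V" "X \<noteq> {}" "edge_connected ends k F X"
  obtains Y where "X \<subseteq> Y" "kecc_component V ends k F Y"
proof -
  let ?A = "{Y. Y \<subseteq> V \<and> edge_connected ends k F Y}"
  have "finite ?A" using assms(1) by (simp add: finite_Collect_conjI finite_Collect_subsets)
  moreover have "X \<in> ?A" using assms(2,4) by simp
  ultimately have "\<exists>Y\<in>?A. X \<subseteq> Y \<and> (\<forall>Z\<in>?A. Y \<subseteq> Z \<longrightarrow> Y = Z)"
    by (rule finite_has_maximal2)
  then obtain Y where Y: "Y \<in> ?A" "X \<subseteq> Y" and max: "\<forall>Z\<in>?A. Y \<subseteq> Z \<longrightarrow> Y = Z"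
    by blast
  have "kecc_component V ends k F Y"
    unfolding kecc_component_def
  proof (intro conjI allI impI)
    show "Y \<subseteq> V" "edge_connected ends k F Y" using Y(1) by simp_all
    show "Y \<noteq> {}" using Y(2) assms(3) by blast
    show "\<not> edge_connected ends k F Z" if "Y \<subset> Z \<and> Z \<subseteq> V" for Z
      using max that by blast
  qed
  with Y(2) show thesis by (rule that)
qed

lemma kecc_edges_subset: "kecc_edges V ends k F \<subseteq> F"
  unfolding kecc_edges_def by blast

lemma kecc_edges_mono:
  assumes "finite V" "finite F'" "kecc_edges V ends k F \<subseteq> F'"
  shows "kecc_edges V ends k F \<subseteq> kecc_edges V ends k F'"
proof
  fix e assume e: "e \<in> kecc_edges V ends k F"
  then obtain X where X: "kecc_component V ends k F X" "fst (ends e) \<in> X" "snd (ends e) \<in> X"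
    unfolding kecc_edges_def by blast
  then have X_sub: "X \<subseteq> V" and X_ne: "X \<noteq> {}" and X_ec: "edge_connected ends k F X"
    unfolding kecc_component_def by simp_all
  have "induced ends F X \<subseteq> kecc_edges V ends k F"
    using X(1) unfolding induced_def kecc_edges_def by blast
  then have "edge_connected ends k F' X"
    using assms(3) by (intro edge_connected_mono[OF X_ec _ assms(2)]) (rule order_trans)
  then obtain Y where "X \<subseteq> Y" "kecc_component V ends k F' Y"
    using edge_connected_in_kecc_component[OF assms(1) X_sub X_ne] by blast
  moreover have "e \<in> F'" using assms(3) e by (rule subsetD)
  ultimately show "e \<in> kecc_edges V ends k F'"
    using X(2,3) unfolding kecc_edges_def by blast
qed

lemma sampled_mono: "sampled r s i \<subseteq> sampled r s (Suc i)"
  unfolding sampled_def by (rule UN_mono) auto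

lemma finite_sampled: "finite (sampled r s i)"
  unfolding sampled_def by auto

lemma valid_levels_Hs:
  assumes "valid_levels V ends m c \<delta> l s r Gs Hs" "i \<le> l"
    and "\<forall>e\<in>{1..m}. fst (ends e) \<in> V \<and> snd (ends e) \<in> V"
    and "sampled r s i \<subseteq> {1..m}"
  shows "Hs i = kecc_edges V ends c (sampled r s i \<inter> (if i = 0 then {1..m} else Gs (i - 1)))"
    and "Hs i \<subseteq> Gs i"
proof -
  let ?G = "if i = 0 then {1..m} else Gs (i - 1)"
  let ?H = "kecc_edges V ends c (sampled r s i \<inter> ?G)"
  have H_sub: "?H \<subseteq> sampled r s i \<inter> ?G"
    by (rule kecc_edges_subset)
  have "(del_step V ends \<delta>)\<^sup>*\<^sup>* (?G, ?H) (Gs i, Hs i)"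
    using assms(1,2) unfolding valid_levels_def Let_def by blast
  moreover have "\<forall>e\<in>?H. fst (ends e) \<in> V \<and> snd (ends e) \<in> V"
    using H_sub assms(3,4) by blast
  moreover have "?H \<subseteq> ?G" using H_sub by blast
  ultimately have "Hs i = ?H \<and> ?H \<subseteq> Gs i" by (rule del_steps_keep_snd)
  then show "Hs i = ?H" and "Hs i \<subseteq> Gs i" by simp_all
qed

theorem lemma3:
  fixes V :: "'v set" and ends :: "nat \<Rightarrow> 'v \<times> 'v"
    and m c \<delta> l :: nat and p :: real
    and r :: "nat \<Rightarrow> nat \<Rightarrow> nat" and Gs Hs :: "nat \<Rightarrow> nat set"
  assumes "finite V"
    and "\<forall>e\<in>{1..m}. fst (ends e) \<in> V \<and> snd (ends e) \<in> V \<and> fst (ends e) \<noteq> snd (ends e)"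
    and "c \<ge> 1" and "\<delta> > c" and "l \<ge> 1" and "0 < p" and "p < 1"
    and "\<forall>i\<in>{1..l}. \<forall>k\<in>{1..nat \<lceil>p * real m\<rceil>}. r i k \<in> {1..m}"
    and "valid_levels V ends m c \<delta> l (nat \<lceil>p * real m\<rceil>) r Gs Hs"
  shows "\<forall>i < l. Hs i \<subseteq> Hs (Suc i)"
proof (intro allI impI)
  fix i assume "i < l"
  define s where "s = nat \<lceil>p * real m\<rceil>"
  let ?Gprev = "if i = 0 then {1..m} else Gs (i - 1)"
  have ends_in_V: "\<forall>e\<in>{1..m}. fst (ends e) \<in> V \<and> snd (ends e) \<in> V"
    using assms(2) by blast
  have sampled_edges: "sampled r s j \<subseteq> {1..m}" if "j \<le> l" for j
    using assms(8) that unfolding sampled_def s_def by force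
  note level = valid_levels_Hs[OF assms(9)[folded s_def] _ ends_in_V sampled_edges]
  have Hi: "Hs i = kecc_edges V ends c (sampled r s i \<inter> ?Gprev)" "Hs i \<subseteq> Gs i"
    using level[of i] \<open>i < l\<close> by simp_all
  have "Hs i \<subseteq> sampled r s i"
    unfolding Hi(1) using kecc_edges_subset by (rule order_trans) simp
  then have "Hs i \<subseteq> sampled r s (Suc i) \<inter> Gs i"
    using sampled_mono[of r s i] Hi(2) by blast
  then have "Hs i \<subseteq> kecc_edges V ends c (sampled r s (Suc i) \<inter> Gs i)"
    unfolding Hi(1) by (rule kecc_edges_mono[OF assms(1) finite_Int[OF disjI1[OF finite_sampled]]])
  also have "\<dots> = Hs (Suc i)"
    using level(1)[of "Suc i"] \<open>i < l\<close> by simp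
  finally show "Hs i \<subseteq> Hs (Suc i)" .
qed

end
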